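(* Let $\mathcal{U}$ and $\mathcal{A}$ be separable Banach spaces with duals $\mathcal{U}^*,\mathcal{A}^*$ and pairings $[\cdot,\cdot]_{\mathcal{U}},[\cdot,\cdot]_{\mathcal{A}}$, with quadratic norms $\|u\|_{\mathcal{U}}^2=[\mathcal{K}^{-1}u,u]_{\mathcal{U}}$, $\|a\|_{\mathcal{A}}^2=[\mathcal{S}^{-1}a,a]_{\mathcal{A}}$ given by invertible symmetric positive linear maps $\mathcal{K}:\mathcal{U}^*\to\mathcal{U}$, $\mathcal{S}:\mathcal{A}^*\to\mathcal{A}$. Let $\Omega\subseteq\mathbb{R}^d$ be bounded and consider the parametric PDE $\mathcal{P}(u;a)(\mathbf{x})=f(\mathbf{x})$ on $\Omega$, $\mathcal{B}(u;a)(\mathbf{x})=g(\mathbf{x})$ on $\partial\Omega$, where (Assumption) there exist bounded linear $L_1,\dots,L_Q\in\mathcal{L}(\mathcal{U};C(\Omega))$ with $L_1,\dots,L_{Q_b}\in\mathcal{L}(\mathcal{U};C(\partial\Omega))$ ($1\le Q_b\le Q$), bounded linear $\widetilde{L}_1,\dots,\widetilde{L}_J\in\mathcal{L}(\mathcal{A};C(\overline{\Omega}))$, and maps $P:\mathbb{R}^{Q+J}\to\mathbb{R}$, $B:\mathbb{R}^{Q_b+J}\to\mathbb{R}$ with $\mathcal{P}(u;a)(\mathbf{x})=P(L_1(u)(\mathbf{x}),\dots,L_Q(u)(\mathbf{x});\widetilde{L}_1(a)(\mathbf{x}),\dots,\widetilde{L}_J(a)(\mathbf{x}))$ on $\Omega$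 and $\mathcal{B}(u;a)(\mathbf{x})=B(L_1(u)(\mathbf{x}),\dots,L_{Q_b}(u)(\mathbf{x});\widetilde{L}_1(a)(\mathbf{x}),\dots,\widetilde{L}_J(a)(\mathbf{x}))$ on $\partial\Omega$. Let $\psi_1,\dots,\psi_I\in\mathcal{U}^*$, $\boldsymbol{\psi}=(\psi_1,\dots,\psi_I)$, $\mathbf{o}\in\mathbb{R}^I$, $\gamma\ne0$. With the objects in the context, assume $\Theta$ and $\widetilde{\Theta}$ are invertible. Then $(u^\dagger,a^\dagger)\in\mathcal{U}\times\mathcal{A}$ is a minimizer of $$\min_{(u,a)\in\mathcal{U}\times\mathcal{A}}\ \|u\|_{\mathcal{U}}^2+\|a\|_{\mathcal{A}}^2+\frac{1}{\gamma^2}|[\boldsymbol{\psi},u]-\mathbf{o}|^2\ \text{ s.t. }\ \mathcal{P}(u;a)(\mathbf{x}_m)=f(\mathbf{x}_m),\ 1\le m\le M_\Omega;\ \mathcal{B}(u;a)(\mathbf{x}_m)=g(\mathbf{x}_m),\ M_\Omega<m\le M$$ if and only if $u^\dagger=\sum_{n=1}^{I+N}z^\dagger_n\chi_n$ and $a^\dagger=\sum_{n=1}^{\widetilde{N}}\widetilde{z}^\dagger_n\widetilde{\chi}_n$, where $(\mathbf{z}^\dagger,\widetilde{\mathbf{z}}^\dagger)$ is a minimizer of $$\min_{(\mathbf{z},\widetilde{\mathbf{z}})\in\mathbb{R}^{I+N}\times\mathbb{R}^{\widetilde{N}}}\ \mathbf{z}^T\Theta^{-1}\mathbf{z}+\widetilde{\mathbf{z}}^T\widetilde{\Theta}^{-1}\widetilde{\mathbf{z}}+\frac{1}{\gamma^2}|\Pi^I\mathbf{z}-\mathbf{o}|^2\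 \text{ s.t. }\ F(\Pi_N\mathbf{z};\widetilde{\mathbf{z}})=\mathbf{y}.$$
   Context: Collocation points $\mathbf{x}_1,\dots,\mathbf{x}_{M_\Omega}\in\Omega$, $\mathbf{x}_{M_\Omega+1},\dots,\mathbf{x}_M\in\partial\Omega$. $\phi^{(q)}_m=\delta_{\mathbf{x}_m}\circ L_q\in\mathcal{U}^*$ for $1\le m\le M$ if $q\le Q_b$, for $1\le m\le M_\Omega$ if $q>Q_b$; $\boldsymbol{\phi}=(\boldsymbol{\phi}^{(1)},\dots,\boldsymbol{\phi}^{(Q)})$ with $N=MQ_b+M_\Omega(Q-Q_b)$ entries. $\widetilde{\phi}^{(j)}_m=\delta_{\mathbf{x}_m}\circ\widetilde{L}_j\in\mathcal{A}^*$ for $m=1,\dots,M$, $j=1,\dots,J$; $\widetilde{\boldsymbol{\phi}}=(\widetilde{\boldsymbol{\phi}}^{(1)},\dots,\widetilde{\boldsymbol{\phi}}^{(J)})$ with $\widetilde{N}=MJ$ entries. $\boldsymbol{\varphi}=(\varphi_1,\dots,\varphi_{I+N})$ with $\varphi_n=\psi_n$ for $n\le I$ and $\varphi_n=\phi_{n-I}$ for $n>I$ (the $\phi_k$ being the entries of $\boldsymbol{\phi}$). $\Theta_{i,n}=[\varphi_i,\mathcal{K}\varphi_n]_{\mathcal{U}}$, $\widetilde{\Theta}_{i,n}=[\widetilde{\phi}_i,\mathcal{S}\widetilde{\phi}_n]_{\mathcal{A}}$; $\chi_i=\sum_{n=1}^{N+I}(\Theta^{-1})_{i,n}\mathcal{K}\varphi_n$,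 $\widetilde{\chi}_i=\sum_{n=1}^{\widetilde{N}}(\widetilde{\Theta}^{-1})_{i,n}\mathcal{S}\widetilde{\phi}_n$. $y_m=f(\mathbf{x}_m)$ for $m\le M_\Omega$, $g(\mathbf{x}_m)$ otherwise. $F$ is defined by $(F([\boldsymbol{\phi},u]_{\mathcal{U}};[\widetilde{\boldsymbol{\phi}},a]_{\mathcal{A}}))_m=P([\phi^{(1)}_m,u]_{\mathcal{U}},\dots,[\phi^{(Q)}_m,u]_{\mathcal{U}};[\widetilde{\phi}^{(1)}_m,a]_{\mathcal{A}},\dots,[\widetilde{\phi}^{(J)}_m,a]_{\mathcal{A}})$ for $m\le M_\Omega$ and $B([\phi^{(1)}_m,u]_{\mathcal{U}},\dots,[\phi^{(Q_b)}_m,u]_{\mathcal{U}};[\widetilde{\phi}^{(1)}_m,a]_{\mathcal{A}},\dots,[\widetilde{\phi}^{(J)}_m,a]_{\mathcal{A}})$ for $m>M_\Omega$ (so $F$ is a map on vectors in $\mathbb{R}^N\times\mathbb{R}^{\widetilde{N}}$). $\Pi^I:\mathbb{R}^{I+N}\to\mathbb{R}^I$ extracts the first $I$ entries, $\Pi_N:\mathbb{R}^{I+N}\to\mathbb{R}^N$ the last $N$ entries. *)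

theory Defs
  imports "HOL-Analysis.Analysis"
begin

text \<open>Finite square matrices of size n are represented as functions nat => nat => real,
  only the entries with indices below n being relevant (0-based indexing).\<close>

definition is_sq_inverse :: "nat \<Rightarrow> (nat \<Rightarrow> nat \<Rightarrow> real) \<Rightarrow> (nat \<Rightarrow> nat \<Rightarrow> real) \<Rightarrow> bool" where
  "is_sq_inverse n A B \<longleftrightarrow>
     (\<forall>i<n. \<forall>k<n. (\<Sum>j<n. A i j * B j k) = (if i = k then 1 else 0)) \<and>
     (\<forall>i<n. \<forall>k<n. (\<Sum>j<n. B i j * A j k) = (if i = k then 1 else 0))"

definition invertible_sq :: "nat \<Rightarrow> (nat \<Rightarrow> nat \<Rightarrow> real) \<Rightarrow> bool" where
  "invertible_sq n A \<longleftrightarrow> (\<exists>B. is_sq_inverse n A B)"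

definition sq_inv :: "nat \<Rightarrow> (nat \<Rightarrow> nat \<Rightarrow> real) \<Rightarrow> (nat \<Rightarrow> nat \<Rightarrow> real)" where
  "sq_inv n A = (SOME B. is_sq_inverse n A B)"

definition qform :: "nat \<Rightarrow> (nat \<Rightarrow> nat \<Rightarrow> real) \<Rightarrow> (nat \<Rightarrow> real) \<Rightarrow> real" where
  "qform n A z = (\<Sum>i<n. \<Sum>k<n. z i * A i k * z k)"


definition coll_phi :: "(nat \<Rightarrow> 'u::real_normed_vector \<Rightarrow> 'x \<Rightarrow> real) \<Rightarrow> (nat \<Rightarrow> 'x) \<Rightarrow> nat \<Rightarrow> nat \<Rightarrow> ('u \<Rightarrow>\<^sub>L real)" where
  "coll_phi L xs q m = Blinfun (\<lambda>u. L q u (xs m))"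

definition blk :: "nat \<Rightarrow> nat \<Rightarrow> nat \<Rightarrow> nat \<Rightarrow> nat" where
  "blk Qb M MO q = (if q < Qb then M else MO)"

definition off :: "nat \<Rightarrow> nat \<Rightarrow> nat \<Rightarrow> nat \<Rightarrow> nat" where
  "off Qb M MO q = (\<Sum>q'<q. blk Qb M MO q')"

definition Ncount :: "nat \<Rightarrow> nat \<Rightarrow> nat \<Rightarrow> nat \<Rightarrow> nat" where
  "Ncount Q Qb M MO = M * Qb + MO * (Q - Qb)"

definition phi_vec :: "(nat \<Rightarrow> 'u::real_normed_vector \<Rightarrow> 'x \<Rightarrow> real) \<Rightarrow> (nat \<Rightarrow> 'x) \<Rightarrow> nat \<Rightarrow> nat \<Rightarrow> nat \<Rightarrow> nat \<Rightarrow> ('u \<Rightarrow>\<^sub>L real) list" where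
  "phi_vec L xs Q Qb M MO = concat (map (\<lambda>q. map (coll_phi L xs q) [0..<blk Qb M MO q]) [0..<Q])"

definition phit_vec :: "(nat \<Rightarrow> 'a::real_normed_vector \<Rightarrow> 'x \<Rightarrow> real) \<Rightarrow> (nat \<Rightarrow> 'x) \<Rightarrow> nat \<Rightarrow> nat \<Rightarrow> ('a \<Rightarrow>\<^sub>L real) list" where
  "phit_vec Lt xs J M = concat (map (\<lambda>j. map (coll_phi Lt xs j) [0..<M]) [0..<J])"

definition varphi :: "(nat \<Rightarrow> 'u::real_normed_vector \<Rightarrow>\<^sub>L real) \<Rightarrow> nat \<Rightarrow> ('u \<Rightarrow>\<^sub>L real) list \<Rightarrow> nat \<Rightarrow> ('u \<Rightarrow>\<^sub>L real)" where
  "varphi \<psi> I phiv n = (if n < I then \<psi> n else phiv ! (n - I))"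

definition gram :: "(('u::real_normed_vector \<Rightarrow>\<^sub>L real) \<Rightarrow> 'u) \<Rightarrow> (nat \<Rightarrow> ('u \<Rightarrow>\<^sub>L real)) \<Rightarrow> nat \<Rightarrow> nat \<Rightarrow> real" where
  "gram K v i n = blinfun_apply (v i) (K (v n))"

definition gamblet :: "nat \<Rightarrow> (('u::real_normed_vector \<Rightarrow>\<^sub>L real) \<Rightarrow> 'u) \<Rightarrow> (nat \<Rightarrow> ('u \<Rightarrow>\<^sub>L real)) \<Rightarrow> nat \<Rightarrow> 'u" where
  "gamblet n0 K v i = (\<Sum>n<n0. sq_inv n0 (gram K v) i n *\<^sub>R K (v n))"

definition ydata :: "('x \<Rightarrow> real) \<Rightarrow> ('x \<Rightarrow> real) \<Rightarrow> (nat \<Rightarrow> 'x) \<Rightarrow> nat \<Rightarrow> nat \<Rightarrow> real" where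
  "ydata f g xs MO m = (if m < MO then f (xs m) else g (xs m))"

text \<open>The map F on R^N x R^Nt: the entry [phi^(q)_m,u] sits at position off q + m of w,
  the entry [phit^(j)_m,a] at position j*M + m of wt.\<close>
definition Fmap :: "(real list \<Rightarrow> real list \<Rightarrow> real) \<Rightarrow> (real list \<Rightarrow> real list \<Rightarrow> real) \<Rightarrow> nat \<Rightarrow> nat \<Rightarrow> nat \<Rightarrow> nat \<Rightarrow> nat
     \<Rightarrow> (nat \<Rightarrow> real) \<Rightarrow> (nat \<Rightarrow> real) \<Rightarrow> nat \<Rightarrow> real" where
  "Fmap P B Q Qb J M MO w wt m =
     (if m < MO then P (map (\<lambda>q. w (off Qb M MO q + m)) [0..<Q]) (map (\<lambda>j. wt (j * M + m)) [0..<J])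
      else B (map (\<lambda>q. w (off Qb M MO q + m)) [0..<Qb]) (map (\<lambda>j. wt (j * M + m)) [0..<J]))"

end

theory Submission
  imports Defs
begin

(*
  Writing <u, w> = [K^-1 u, w], the norm of U is Hilbertian and K is its Riesz map. The gamblets
  chi_i are biorthogonal to the measurement functionals varphi_n, so the gamblet expansion of the
  measurements z = [varphi, u] is the orthogonal projection of u onto span {K varphi_n}, and its
  squared norm is z^T Theta^-1 z. Constraints and data misfit depend on u only through z, so
  replacing u by that projection keeps feasibility and lowers the cost by the squared norm of
  the remainder. The same holds for a with S.
*)

lemma is_sq_inverse_sq_inv: "invertible_sq n A \<Longrightarrow> is_sq_inverse n A (sq_inv n A)"
  unfolding invertible_sq_def sq_inv_def by (metis someI_ex)

lemma is_arg_min_reduction: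
  fixes Jx :: "'x \<Rightarrow> real" and Jz :: "'z \<Rightarrow> real"
  assumes meas_rec: "\<And>z. Cz z \<Longrightarrow> meas (rec z) = z"
    and constraint: "\<And>x. Cx x \<longleftrightarrow> Cz (meas x)"
    and cost: "\<And>x. Jx x = Jz (meas x) + d x"
    and d_nonneg: "\<And>x. 0 \<le> d x"
    and d_zero: "\<And>x. d x = 0 \<longleftrightarrow> x = rec (meas x)"
  shows "is_arg_min Jx Cx x \<longleftrightarrow> (\<exists>z. is_arg_min Jz Cz z \<and> x = rec z)"
proof -
  have rec_feasible: "Cx (rec z)" and cost_rec: "Jx (rec z) = Jz z" if "Cz z" for z
    using that constraint[of "rec z"] cost[of "rec z"] d_zero[of "rec z"] by (simp_all add: meas_rec)
  show ?thesis
  proof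
    assume min: "is_arg_min Jx Cx x"
    then have "Cz (meas x)" using constraint by (simp add: is_arg_min_def)
    with min have "Jx x \<le> Jz (meas x)"
      using rec_feasible cost_rec by (metis is_arg_min_def not_le)
    then have x_rec: "x = rec (meas x)"
      using cost d_nonneg d_zero by (metis add_le_same_cancel1 order_antisym)
    have "is_arg_min Jz Cz (meas x)"
      using min \<open>Cz (meas x)\<close> rec_feasible cost_rec x_rec
      by (metis is_arg_min_def)
    with x_rec show "\<exists>z. is_arg_min Jz Cz z \<and> x = rec z" by blast
  next
    assume "\<exists>z. is_arg_min Jz Cz z \<and> x = rec z"
    then obtain z where min: "is_arg_min Jz Cz z" and x: "x = rec z" by blast
    have "Jz z \<le> Jx x'" if "Cx x'" for x'
    proof -
      have "Jz z \<le> Jz (meas x')" using min that constraint by (metis is_arg_min_def not_le)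
      also have "\<dots> \<le> Jx x'" using cost d_nonneg by (simp add: add_increasing2)
      finally show ?thesis .
    qed
    then show "is_arg_min Jx Cx x"
      using min x rec_feasible cost_rec by (simp add: is_arg_min_def not_less)
  qed
qed

text \<open>The vector [v, u] in R^n, extended by zeros: vectors of R^n are functions on nat
  vanishing from n on, as in the finite-dimensional problem of the statement.\<close>
definition measurements :: "nat \<Rightarrow> (nat \<Rightarrow> ('u::real_normed_vector \<Rightarrow>\<^sub>L real)) \<Rightarrow> 'u \<Rightarrow> nat \<Rightarrow> real" where
  "measurements n v u = (\<lambda>i. if i < n then blinfun_apply (v i) u else 0)"

locale quadratic_norm =
  fixes K :: "('u::real_normed_vector \<Rightarrow>\<^sub>L real) \<Rightarrow> 'u"
  assumes bij_K: "bij K"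
    and K_sym: "blinfun_apply \<phi> (K \<phi>') = blinfun_apply \<phi>' (K \<phi>)"
    and norm_sq: "(norm u)^2 = blinfun_apply (inv K u) u"
begin

lemma K_inv_K: "K (inv K u) = u"
  using bij_K by (simp add: bij_is_surj surj_f_inv_f)

lemma inv_K_apply_K: "blinfun_apply (inv K u) (K \<phi>) = blinfun_apply \<phi> u"
  using K_sym[of "inv K u" \<phi>] by (simp add: K_inv_K)

lemma inv_K_commute: "blinfun_apply (inv K u) w = blinfun_apply (inv K w) u"
  using inv_K_apply_K[of u "inv K w"] by (simp add: K_inv_K)

lemma norm_sq_add_orthogonal:
  assumes "blinfun_apply (inv K u) w = 0"
  shows "(norm (u + w))^2 = (norm u)^2 + (norm w)^2"
proof -
  have "(norm (u + w))^2 = blinfun_apply (inv K u) (u + w) + blinfun_apply (inv K w) (u + w)"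
    by (simp add: norm_sq blinfun.add_right inv_K_commute[of "u + w"])
  also have "\<dots> = (norm u)^2 + (norm w)^2"
    using assms inv_K_commute[of u w] by (simp add: norm_sq blinfun.add_right)
  finally show ?thesis .
qed

context
  fixes n :: nat and v :: "nat \<Rightarrow> ('u \<Rightarrow>\<^sub>L real)"
  assumes gram_invertible: "invertible_sq n (gram K v)"
begin

lemma inv_K_gamblet:
  "blinfun_apply (inv K w) (gamblet n K v k) = (\<Sum>j<n. sq_inv n (gram K v) k j * blinfun_apply (v j) w)"
  unfolding gamblet_def by (simp add: blinfun.sum_right blinfun.scaleR_right inv_K_apply_K)

lemma gamblet_biorthogonal:
  assumes "i < n" "k < n"
  shows "blinfun_apply (v i) (gamblet n K v k) = (if k = i then 1 else 0)"
proof -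
  have "blinfun_apply (v i) (gamblet n K v k) = (\<Sum>j<n. sq_inv n (gram K v) k j * gram K v j i)"
    unfolding gamblet_def gram_def
    by (simp add: blinfun.sum_right blinfun.scaleR_right K_sym[of "v i"])
  also have "\<dots> = (if k = i then 1 else 0)"
    using is_sq_inverse_sq_inv[OF gram_invertible] assms unfolding is_sq_inverse_def by blast
  finally show ?thesis .
qed

lemma apply_gamblet_sum:
  assumes "i < n"
  shows "blinfun_apply (v i) (\<Sum>k<n. z k *\<^sub>R gamblet n K v k) = z i"
  using assms by (simp add: blinfun.sum_right blinfun.scaleR_right gamblet_biorthogonal if_distrib cong: if_cong)

lemma measurements_gamblet_sum:
  assumes "\<forall>k. n \<le> k \<longrightarrow> z k = 0"
  shows "measurements n v (\<Sum>k<n. z k *\<^sub>R gamblet n K v k) = z"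
  using assms by (auto simp: measurements_def apply_gamblet_sum not_less)

lemma inv_K_gamblet_sum:
  "blinfun_apply (inv K w) (\<Sum>k<n. z k *\<^sub>R gamblet n K v k)
     = (\<Sum>k<n. \<Sum>j<n. z k * sq_inv n (gram K v) k j * blinfun_apply (v j) w)"
  by (simp add: blinfun.sum_right blinfun.scaleR_right inv_K_gamblet sum_distrib_left mult.assoc)

lemma norm_sq_gamblet_sum:
  "(norm (\<Sum>k<n. z k *\<^sub>R gamblet n K v k))^2 = qform n (sq_inv n (gram K v)) z"
  by (simp add: norm_sq inv_K_gamblet_sum qform_def apply_gamblet_sum)

lemma norm_sq_eq_qform_measurements:
  "(norm u)^2 = qform n (sq_inv n (gram K v)) (measurements n v u)
     + (norm (u - (\<Sum>k<n. measurements n v u k *\<^sub>R gamblet n K v k)))^2"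
proof -
  define r where "r = (\<Sum>k<n. measurements n v u k *\<^sub>R gamblet n K v k)"
  have "blinfun_apply (v j) (u - r) = 0" if "j < n" for j
    using that by (simp add: r_def blinfun.diff_right apply_gamblet_sum measurements_def)
  then have "blinfun_apply (inv K (u - r)) r = 0"
    by (simp add: r_def inv_K_gamblet_sum)
  then have "blinfun_apply (inv K r) (u - r) = 0"
    by (simp add: inv_K_commute[of r])
  then have "(norm (r + (u - r)))^2 = (norm r)^2 + (norm (u - r))^2"
    by (rule norm_sq_add_orthogonal)
  then show ?thesis by (simp add: r_def norm_sq_gamblet_sum)
qed

end

end

theorem is_arg_min_iff_gamblet_representation:
  fixes K :: "('u::real_normed_vector \<Rightarrow>\<^sub>L real) \<Rightarrow> 'u"
    and S :: "('a::real_normed_vector \<Rightarrow>\<^sub>L real) \<Rightarrow> 'a"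
    and v :: "nat \<Rightarrow> ('u \<Rightarrow>\<^sub>L real)" and vt :: "nat \<Rightarrow> ('a \<Rightarrow>\<^sub>L real)"
    and \<psi> :: "nat \<Rightarrow> ('u \<Rightarrow>\<^sub>L real)" and obs :: "nat \<Rightarrow> real" and c :: real
  assumes "quadratic_norm K" "quadratic_norm S"
    and gram_invertible: "invertible_sq n (gram K v)" "invertible_sq nt (gram S vt)"
    and \<psi>_first: "I \<le> n" "\<And>i. i < I \<Longrightarrow> v i = \<psi> i"
    and constraint: "\<And>u a. C u a \<longleftrightarrow> Cz (measurements n v u) (measurements nt vt a)"
  shows "is_arg_min
           (\<lambda>(u, a). (norm u)^2 + (norm a)^2 + c * (\<Sum>i<I. (blinfun_apply (\<psi> i) u - obs i)^2))
           (\<lambda>(u, a). C u a) (ud, ad)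
         \<longleftrightarrow>
         (\<exists>zd ztd. is_arg_min
              (\<lambda>(z, zt). qform n (sq_inv n (gram K v)) z + qform nt (sq_inv nt (gram S vt)) zt
                          + c * (\<Sum>i<I. (z i - obs i)^2))
              (\<lambda>(z, zt). (\<forall>k. n \<le> k \<longrightarrow> z k = 0) \<and> (\<forall>k. nt \<le> k \<longrightarrow> zt k = 0) \<and> Cz z zt)
              (zd, ztd)
            \<and> ud = (\<Sum>k<n. zd k *\<^sub>R gamblet n K v k)
            \<and> ad = (\<Sum>k<nt. ztd k *\<^sub>R gamblet nt S vt k))"
proof -
  interpret U: quadratic_norm K by fact
  interpret A: quadratic_norm S by fact
  define Jx where "Jx = (\<lambda>(u, a :: 'a). (norm u)^2 + (norm a)^2 + c * (\<Sum>i<I. (blinfun_apply (\<psi> i) u - obs i)^2))"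
  define Jz where "Jz = (\<lambda>(z, zt). qform n (sq_inv n (gram K v)) z + qform nt (sq_inv nt (gram S vt)) zt
                          + c * (\<Sum>i<I. (z i - obs i)^2))"
  define Cx where "Cx = (\<lambda>(u, a). C u a)"
  define Cz_padded where "Cz_padded = (\<lambda>(z, zt). (\<forall>k. n \<le> k \<longrightarrow> z k = 0) \<and> (\<forall>k. nt \<le> k \<longrightarrow> zt k = 0) \<and> Cz z zt)"
  define rec where "rec = (\<lambda>(z, zt). (\<Sum>k<n. z k *\<^sub>R gamblet n K v k, \<Sum>k<nt. zt k *\<^sub>R gamblet nt S vt k))"
  define meas where "meas = (\<lambda>(u, a). (measurements n v u, measurements nt vt a))"
  define d where "d = (\<lambda>x. (norm (fst x - fst (rec (meas x))))^2 + (norm (snd x - snd (rec (meas x))))^2)"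
  have "meas (rec z) = z" if "Cz_padded z" for z
    using that U.measurements_gamblet_sum[OF gram_invertible(1)] A.measurements_gamblet_sum[OF gram_invertible(2)]
    by (auto simp: meas_def rec_def Cz_padded_def split: prod.splits)
  moreover have "Cx x \<longleftrightarrow> Cz_padded (meas x)" for x :: "'u \<times> 'a"
    by (auto simp: Cx_def Cz_padded_def meas_def measurements_def constraint split: prod.splits)
  moreover have "Jx x = Jz (meas x) + d x" for x :: "'u \<times> 'a"
  proof -
    obtain u a where x: "x = (u, a)" by fastforce
    have "(\<Sum>i<I. (blinfun_apply (\<psi> i) u - obs i)^2) = (\<Sum>i<I. (measurements n v u i - obs i)^2)"
      using \<psi>_first by (intro sum.cong) (auto simp: measurements_def)
    then show ?thesis
      using U.norm_sq_eq_qform_measurements[OF gram_invertible(1), of u]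
        A.norm_sq_eq_qform_measurements[OF gram_invertible(2), of a]
      by (simp add: x Jx_def Jz_def d_def meas_def rec_def)
  qed
  moreover have "0 \<le> d x" for x :: "'u \<times> 'a"
    by (simp add: d_def)
  moreover have "d x = 0 \<longleftrightarrow> x = rec (meas x)" for x :: "'u \<times> 'a"
    by (simp add: d_def add_nonneg_eq_0_iff prod_eq_iff)
  ultimately have "is_arg_min Jx Cx (ud, ad) \<longleftrightarrow> (\<exists>z. is_arg_min Jz Cz_padded z \<and> (ud, ad) = rec z)"
    by (rule is_arg_min_reduction)
  then show ?thesis
    unfolding Jx_def Jz_def Cx_def Cz_padded_def by (auto simp: rec_def)
qed

lemma length_concat_map_blocks:
  "length (concat (map (\<lambda>q. map (h q) [0..<b q]) [0..<Q])) = (\<Sum>q<Q. b q)"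
  by (induction Q) auto

lemma nth_concat_map_blocks:
  assumes "q < Q" "m < b q"
  shows "concat (map (\<lambda>q. map (h q) [0..<b q]) [0..<Q]) ! ((\<Sum>q'<q. b q') + m) = h q m"
  using assms
proof (induction Q)
  case 0
  then show ?case by simp
next
  case (Suc Q)
  show ?case
  proof (cases "q < Q")
    case True
    have "(\<Sum>q'<q. b q') + m < (\<Sum>q'<Suc q. b q')" using Suc.prems by simp
    also have "\<dots> \<le> (\<Sum>q'<Q. b q')" using True by (intro sum_mono2) auto
    finally show ?thesis using Suc True by (simp add: nth_append length_concat_map_blocks)
  next
    case False
    then have "q = Q" using Suc.prems by simp
    then show ?thesis using Suc.prems by (simp add: nth_append length_concat_map_blocks)
  qed
qed

lemma sum_blk: "(\<Sum>q<Q. blk Qb M MO q) = M * min Q Qb + MO * (Q - Qb)"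
  by (induction Q) (auto simp: blk_def min_def Suc_diff_le)

lemma off_add_less_Ncount:
  assumes "Qb \<le> Q" "q < Q" "m < blk Qb M MO q"
  shows "off Qb M MO q + m < Ncount Q Qb M MO"
proof -
  have "off Qb M MO q + m < (\<Sum>q'<Suc q. blk Qb M MO q')" using assms by (simp add: off_def)
  also have "\<dots> \<le> (\<Sum>q'<Q. blk Qb M MO q')" using assms by (intro sum_mono2) auto
  finally show ?thesis using assms by (simp add: sum_blk Ncount_def min_absorb2 mult.commute)
qed

lemma phi_vec_nth:
  "q < Q \<Longrightarrow> m < blk Qb M MO q \<Longrightarrow> phi_vec L xs Q Qb M MO ! (off Qb M MO q + m) = coll_phi L xs q m"
  unfolding phi_vec_def off_def by (rule nth_concat_map_blocks)

lemma phit_vec_nth: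
  "j < J \<Longrightarrow> m < M \<Longrightarrow> phit_vec Lt xs J M ! (j * M + m) = coll_phi Lt xs j m"
  using nth_concat_map_blocks[of j J m "\<lambda>_. M" "coll_phi Lt xs"] by (simp add: phit_vec_def)

lemma coll_phi_apply:
  "bounded_linear (\<lambda>u. L q u (xs m)) \<Longrightarrow> blinfun_apply (coll_phi L xs q m) u = L q u (xs m)"
  by (simp add: coll_phi_def bounded_linear_Blinfun_apply)

lemma bounded_linear_evaluation:
  fixes L :: "'u::real_normed_vector \<Rightarrow> 'x \<Rightarrow> real"
  assumes "x \<in> X" "\<forall>x\<in>X. linear (\<lambda>u. L u x)" "\<exists>C. \<forall>u. \<forall>x\<in>X. \<bar>L u x\<bar> \<le> C * norm u"
  shows "bounded_linear (\<lambda>u. L u x)"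
proof -
  obtain C where "\<forall>u. \<bar>L u x\<bar> \<le> C * norm u" using assms by blast
  then have "\<forall>u. norm (L u x) \<le> norm u * C" by (simp add: mult.commute)
  with assms show ?thesis by (auto simp: bounded_linear_def bounded_linear_axioms_def)
qed

lemma measurements_phi_vec:
  assumes "Qb \<le> Q" "q < Q" "m < blk Qb M MO q" "bounded_linear (\<lambda>u. L q u (xs m))"
  shows "measurements (I + Ncount Q Qb M MO) (varphi \<psi> I (phi_vec L xs Q Qb M MO)) u (I + (off Qb M MO q + m))
           = L q u (xs m)"
  using assms off_add_less_Ncount[OF assms(1-3)]
  by (simp add: measurements_def varphi_def phi_vec_nth coll_phi_apply)

lemma measurements_phit_vec:
  assumes "j < J" "m < M" "bounded_linear (\<lambda>a. Lt j a (xs m))"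
  shows "measurements (M * J) (\<lambda>n. phit_vec Lt xs J M ! n) a (j * M + m) = Lt j a (xs m)"
proof -
  have "j * M + m < Suc j * M" using assms by simp
  also have "\<dots> \<le> J * M" using assms by (intro mult_le_mono1) simp
  finally have "j * M + m < M * J" by (simp add: mult.commute)
  then show ?thesis
    using assms by (simp add: measurements_def phit_vec_nth coll_phi_apply)
qed

lemma Fmap_measurements:
  assumes "MO \<le> M" "Qb \<le> Q" "m < M"
    and L_bl: "\<And>q. q < Q \<Longrightarrow> m < blk Qb M MO q \<Longrightarrow> bounded_linear (\<lambda>u. L q u (xs m))"
    and Lt_bl: "\<And>j. j < J \<Longrightarrow> bounded_linear (\<lambda>a. Lt j a (xs m))"
  shows "Fmap P B Q Qb J M MO
            (\<lambda>k. measurements (I + Ncount Q Qb M MO) (varphi \<psi> I (phi_vec L xs Q Qb M MO)) u (I + k))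
            (measurements (M * J) (\<lambda>n. phit_vec Lt xs J M ! n) a) m
         = (if m < MO then P (map (\<lambda>q. L q u (xs m)) [0..<Q]) (map (\<lambda>j. Lt j a (xs m)) [0..<J])
            else B (map (\<lambda>q. L q u (xs m)) [0..<Qb]) (map (\<lambda>j. Lt j a (xs m)) [0..<J]))"
proof -
  have phi: "measurements (I + Ncount Q Qb M MO) (varphi \<psi> I (phi_vec L xs Q Qb M MO)) u (I + (off Qb M MO q + m))
               = L q u (xs m)" if "q < Q" "m < MO \<or> q < Qb" for q
    using that assms by (intro measurements_phi_vec) (auto simp: blk_def)
  have phit: "measurements (M * J) (\<lambda>n. phit_vec Lt xs J M ! n) a (j * M + m) = Lt j a (xs m)" if "j < J" for j
    using that assms measurements_phit_vec by blast
  have interior: "map (\<lambda>q. measurements (I + Ncount Q Qb M MO) (varphi \<psi> I (phi_vec L xs Q Qb M MO)) u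
                      (I + (off Qb M MO q + m))) [0..<Q] = map (\<lambda>q. L q u (xs m)) [0..<Q]" if "m < MO"
    using that by (simp add: phi cong: map_cong)
  have boundary: "map (\<lambda>q. measurements (I + Ncount Q Qb M MO) (varphi \<psi> I (phi_vec L xs Q Qb M MO)) u
                      (I + (off Qb M MO q + m))) [0..<Qb] = map (\<lambda>q. L q u (xs m)) [0..<Qb]"
    using \<open>Qb \<le> Q\<close> by (simp add: phi cong: map_cong)
  have "map (\<lambda>j. measurements (M * J) (\<lambda>n. phit_vec Lt xs J M ! n) a (j * M + m)) [0..<J]
          = map (\<lambda>j. Lt j a (xs m)) [0..<J]"
    by (simp add: phit cong: map_cong)
  with interior boundary show ?thesis
    by (simp add: Fmap_def del: map_eq_conv)
qed

locale collocation_problem =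
  fixes \<Omega> :: "'x::topological_space set" and xs :: "nat \<Rightarrow> 'x" and M MO :: nat
    and L :: "nat \<Rightarrow> 'u::real_normed_vector \<Rightarrow> 'x \<Rightarrow> real" and Q Qb :: nat
    and Lt :: "nat \<Rightarrow> 'a::real_normed_vector \<Rightarrow> 'x \<Rightarrow> real" and J :: nat
    and Pop Bop :: "'u \<Rightarrow> 'a \<Rightarrow> 'x \<Rightarrow> real" and P B :: "real list \<Rightarrow> real list \<Rightarrow> real"
  assumes MO_le: "MO \<le> M" and Qb_le: "Qb \<le> Q"
    and xs_interior: "m < MO \<Longrightarrow> xs m \<in> \<Omega>"
    and xs_boundary: "MO \<le> m \<Longrightarrow> m < M \<Longrightarrow> xs m \<in> frontier \<Omega>"
    and L_interior: "q < Q \<Longrightarrow> x \<in> \<Omega> \<Longrightarrow> bounded_linear (\<lambda>u. L q u x)"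
    and L_boundary: "q < Qb \<Longrightarrow> x \<in> frontier \<Omega> \<Longrightarrow> bounded_linear (\<lambda>u. L q u x)"
    and Lt_closure: "j < J \<Longrightarrow> x \<in> closure \<Omega> \<Longrightarrow> bounded_linear (\<lambda>a. Lt j a x)"
    and Pop_eq: "x \<in> \<Omega> \<Longrightarrow> Pop u a x = P (map (\<lambda>q. L q u x) [0..<Q]) (map (\<lambda>j. Lt j a x) [0..<J])"
    and Bop_eq: "x \<in> frontier \<Omega> \<Longrightarrow> Bop u a x = B (map (\<lambda>q. L q u x) [0..<Qb]) (map (\<lambda>j. Lt j a x) [0..<J])"
begin

lemma bounded_linear_L_at_collocation_point:
  assumes "q < Q" "m < blk Qb M MO q"
  shows "bounded_linear (\<lambda>u. L q u (xs m))"
proof (cases "m < MO")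
  case True
  then show ?thesis using assms by (simp add: L_interior xs_interior)
next
  case False
  then have "q < Qb" "MO \<le> m" "m < M" using assms by (auto simp: blk_def split: if_splits)
  then show ?thesis by (simp add: L_boundary xs_boundary)
qed

lemma bounded_linear_Lt_at_collocation_point:
  assumes "j < J" "m < M"
  shows "bounded_linear (\<lambda>a. Lt j a (xs m))"
proof -
  have "xs m \<in> closure \<Omega>"
    using assms xs_interior xs_boundary closure_subset by (cases "m < MO") (auto simp: frontier_def)
  with assms show ?thesis by (simp add: Lt_closure)
qed

lemma Fmap_measurements_eq_operators:
  assumes "m < M"
  shows "Fmap P B Q Qb J M MO
            (\<lambda>k. measurements (I + Ncount Q Qb M MO) (varphi \<psi> I (phi_vec L xs Q Qb M MO)) u (I + k))
            (measurements (M * J) (\<lambda>n. phit_vec Lt xs J M ! n) a) m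
         = (if m < MO then Pop u a (xs m) else Bop u a (xs m))"
  using Fmap_measurements[where L = L and Lt = Lt and xs = xs, OF MO_le Qb_le assms
      bounded_linear_L_at_collocation_point bounded_linear_Lt_at_collocation_point[OF _ assms]]
    assms by (simp add: Pop_eq Bop_eq xs_interior xs_boundary)

lemma collocation_constraints_iff_Fmap:
  "((\<forall>m<MO. Pop u a (xs m) = f (xs m)) \<and> (\<forall>m. MO \<le> m \<and> m < M \<longrightarrow> Bop u a (xs m) = g (xs m)))
     \<longleftrightarrow> (\<forall>m<M. Fmap P B Q Qb J M MO
            (\<lambda>k. measurements (I + Ncount Q Qb M MO) (varphi \<psi> I (phi_vec L xs Q Qb M MO)) u (I + k))
            (measurements (M * J) (\<lambda>n. phit_vec Lt xs J M ! n) a) m = ydata f g xs MO m)"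
proof -
  have "(\<forall>m<M. Fmap P B Q Qb J M MO
            (\<lambda>k. measurements (I + Ncount Q Qb M MO) (varphi \<psi> I (phi_vec L xs Q Qb M MO)) u (I + k))
            (measurements (M * J) (\<lambda>n. phit_vec Lt xs J M ! n) a) m = ydata f g xs MO m)
        \<longleftrightarrow> (\<forall>m<M. if m < MO then Pop u a (xs m) = f (xs m) else Bop u a (xs m) = g (xs m))"
    by (simp add: Fmap_measurements_eq_operators ydata_def)
  also have "\<dots> \<longleftrightarrow> (\<forall>m<MO. Pop u a (xs m) = f (xs m)) \<and> (\<forall>m. MO \<le> m \<and> m < M \<longrightarrow> Bop u a (xs m) = g (xs m))"
    using MO_le by (meson leD leI order_less_le_trans)
  finally show ?thesis by simp
qed

end

theorem corollary4p4:
  fixes K :: "('u::banach \<Rightarrow>\<^sub>L real) \<Rightarrow> 'u"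
    and S :: "('a::banach \<Rightarrow>\<^sub>L real) \<Rightarrow> 'a"
    and \<Omega> :: "'x::euclidean_space set"
    and xs :: "nat \<Rightarrow> 'x" and M MO :: nat
    and L :: "nat \<Rightarrow> 'u \<Rightarrow> 'x \<Rightarrow> real" and Q Qb :: nat
    and Lt :: "nat \<Rightarrow> 'a \<Rightarrow> 'x \<Rightarrow> real" and J :: nat
    and Pop :: "'u \<Rightarrow> 'a \<Rightarrow> 'x \<Rightarrow> real" and Bop :: "'u \<Rightarrow> 'a \<Rightarrow> 'x \<Rightarrow> real"
    and P :: "real list \<Rightarrow> real list \<Rightarrow> real" and B :: "real list \<Rightarrow> real list \<Rightarrow> real"
    and f g :: "'x \<Rightarrow> real"
    and \<psi> :: "nat \<Rightarrow> ('u \<Rightarrow>\<^sub>L real)" and I :: nat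
    and obs :: "nat \<Rightarrow> real" and \<gamma> :: real
    and ud :: 'u and ad :: 'a
  assumes sepU: "\<exists>D::'u set. countable D \<and> closure D = UNIV"
    and sepA: "\<exists>D::'a set. countable D \<and> closure D = UNIV"
    and K_lin: "linear K" and K_bij: "bij K"
    and K_sym: "\<forall>\<phi> \<phi>'. blinfun_apply \<phi> (K \<phi>') = blinfun_apply \<phi>' (K \<phi>)"
    and K_pos: "\<forall>\<phi>. \<phi> \<noteq> 0 \<longrightarrow> blinfun_apply \<phi> (K \<phi>) > 0"
    and normU: "\<forall>u. (norm u)^2 = blinfun_apply (inv K u) u"
    and S_lin: "linear S" and S_bij: "bij S"
    and S_sym: "\<forall>\<phi> \<phi>'. blinfun_apply \<phi> (S \<phi>') = blinfun_apply \<phi>' (S \<phi>)"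
    and S_pos: "\<forall>\<phi>. \<phi> \<noteq> 0 \<longrightarrow> blinfun_apply \<phi> (S \<phi>) > 0"
    and normA: "\<forall>a. (norm a)^2 = blinfun_apply (inv S a) a"
    and \<Omega>_bdd: "bounded \<Omega>"
    and MO_le: "MO \<le> M"
    and xs_int: "\<forall>m<MO. xs m \<in> \<Omega>"
    and xs_bd: "\<forall>m. MO \<le> m \<and> m < M \<longrightarrow> xs m \<in> frontier \<Omega>"
    and Qb_ge: "1 \<le> Qb" and Qb_le: "Qb \<le> Q"
    and L_Omega: "\<forall>q<Q. (\<forall>x\<in>\<Omega>. linear (\<lambda>u. L q u x)) \<and> (\<forall>u. continuous_on \<Omega> (L q u))
                    \<and> (\<exists>C. \<forall>u. \<forall>x\<in>\<Omega>. \<bar>L q u x\<bar> \<le> C * norm u)"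
    and L_bdry: "\<forall>q<Qb. (\<forall>x\<in>frontier \<Omega>. linear (\<lambda>u. L q u x)) \<and> (\<forall>u. continuous_on (frontier \<Omega>) (L q u))
                    \<and> (\<exists>C. \<forall>u. \<forall>x\<in>frontier \<Omega>. \<bar>L q u x\<bar> \<le> C * norm u)"
    and Lt_cl: "\<forall>j<J. (\<forall>x\<in>closure \<Omega>. linear (\<lambda>a. Lt j a x)) \<and> (\<forall>a. continuous_on (closure \<Omega>) (Lt j a))
                    \<and> (\<exists>C. \<forall>a. \<forall>x\<in>closure \<Omega>. \<bar>Lt j a x\<bar> \<le> C * norm a)"
    and Pop_eq: "\<forall>u a. \<forall>x\<in>\<Omega>. Pop u a x = P (map (\<lambda>q. L q u x) [0..<Q]) (map (\<lambda>j. Lt j a x) [0..<J])"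
    and Bop_eq: "\<forall>u a. \<forall>x\<in>frontier \<Omega>. Bop u a x = B (map (\<lambda>q. L q u x) [0..<Qb]) (map (\<lambda>j. Lt j a x) [0..<J])"
    and \<gamma>_nz: "\<gamma> \<noteq> 0"
    and \<Theta>_inv: "invertible_sq (I + Ncount Q Qb M MO)
                    (gram K (varphi \<psi> I (phi_vec L xs Q Qb M MO)))"
    and \<Theta>t_inv: "invertible_sq (M * J) (gram S (\<lambda>n. phit_vec Lt xs J M ! n))"
  shows "is_arg_min
           (\<lambda>(u, a). (norm u)^2 + (norm a)^2 + (1 / \<gamma>^2) * (\<Sum>i<I. (blinfun_apply (\<psi> i) u - obs i)^2))
           (\<lambda>(u, a). (\<forall>m<MO. Pop u a (xs m) = f (xs m)) \<and> (\<forall>m. MO \<le> m \<and> m < M \<longrightarrow> Bop u a (xs m) = g (xs m)))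
           (ud, ad)
         \<longleftrightarrow>
         (\<exists>zd ztd. is_arg_min
              (\<lambda>(z, zt). qform (I + Ncount Q Qb M MO) (sq_inv (I + Ncount Q Qb M MO) (gram K (varphi \<psi> I (phi_vec L xs Q Qb M MO)))) z
                          + qform (M * J) (sq_inv (M * J) (gram S (\<lambda>n. phit_vec Lt xs J M ! n))) zt
                          + (1 / \<gamma>^2) * (\<Sum>i<I. (z i - obs i)^2))
              (\<lambda>(z, zt). (\<forall>n. I + Ncount Q Qb M MO \<le> n \<longrightarrow> z n = 0) \<and> (\<forall>n. M * J \<le> n \<longrightarrow> zt n = 0)
                          \<and> (\<forall>m<M. Fmap P B Q Qb J M MO (\<lambda>k. z (I + k)) zt m = ydata f g xs MO m))
              (zd, ztd)
            \<and> ud = (\<Sum>n<I + Ncount Q Qb M MO. zd n *\<^sub>R gamblet (I + Ncount Q Qb M MO) K (varphi \<psi> I (phi_vec L xs Q Qb M MO)) n)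
            \<and> ad = (\<Sum>n<M * J. ztd n *\<^sub>R gamblet (M * J) S (\<lambda>n. phit_vec Lt xs J M ! n) n))"
proof -
  interpret collocation_problem \<Omega> xs M MO L Q Qb Lt J Pop Bop P B
  proof (rule collocation_problem.intro)
    show "bounded_linear (\<lambda>u. L q u x)" if "q < Q" "x \<in> \<Omega>" for q x
      using L_Omega that bounded_linear_evaluation[where L = "L q" and X = \<Omega>] by blast
    show "bounded_linear (\<lambda>u. L q u x)" if "q < Qb" "x \<in> frontier \<Omega>" for q x
      using L_bdry that bounded_linear_evaluation[where L = "L q" and X = "frontier \<Omega>"] by blast
    show "bounded_linear (\<lambda>a. Lt j a x)" if "j < J" "x \<in> closure \<Omega>" for j x
      using Lt_cl that bounded_linear_evaluation[where L = "Lt j" and X = "closure \<Omega>"] by blast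
  qed (use MO_le Qb_le xs_int xs_bd Pop_eq Bop_eq in auto)
  have quadratic_norms: "quadratic_norm K" "quadratic_norm S"
    using K_bij K_sym normU S_bij S_sym normA by (simp_all add: quadratic_norm_def)
  show ?thesis
    by (rule is_arg_min_iff_gamblet_representation)
      (use quadratic_norms \<Theta>_inv \<Theta>t_inv collocation_constraints_iff_Fmap in \<open>simp_all add: varphi_def\<close>)
qed

end
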